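(* Consider the delay differential system \[ \begin{aligned} \dot T(t)&= s-dT(t)+aT(t)\Big(1-\frac{T(t)+I(t)}{T_{\max}}\Big)-\frac{bT(t)V(t)}{1+\alpha V(t)},\\ \dot I(t)&= \frac{bT(t-\tau)V(t-\tau)}{1+\alpha V(t-\tau)}+aI(t)\Big(1-\frac{T(t)+I(t)}{T_{\max}}\Big)-\mu I(t),\\ \dot V(t)&= pI(t)-cV(t), \end{aligned} \] with positive constants $s,d,a,T_{\max},b,\alpha,\mu,p,c$ and $\tau\ge0$. Let \[ T_0=\frac{T_{\max}}{2a}\Big(a-d+\sqrt{(a-d)^2+\tfrac{4as}{T_{\max}}}\Big),\qquad R_0=\frac{1}{\mu}\Big[\frac{bpT_0}{c}+a\Big(1-\frac{T_0}{T_{\max}}\Big)\Big], \] and let $E_1=(T_0,0,0)$ be the infection-free equilibrium. If $R_0>1$, then the characteristic equation of the linearization at $E_1$ has a positive real root, so $E_1$ is unstable; if $R_0<1$, then $E_1$ is locally asymptotically stable for every $\tau\ge0$.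
   Context: $E_1$ is a constant solution of the system. Local stability refers to the linearization of the delay system at the equilibrium. *)

theory Defs
  imports "HOL-Analysis.Analysis"
begin

text \<open>State vector (T, I, V) as real^3: component 1 = T, 2 = I, 3 = V.
  The right-hand side F(x, y) of the delay system, where x is the current state
  (T(t), I(t), V(t)) and y the delayed state (T(t-tau), I(t-tau), V(t-tau)).\<close>

definition sysF ::
  "real \<Rightarrow> real \<Rightarrow> real \<Rightarrow> real \<Rightarrow> real \<Rightarrow> real \<Rightarrow> real \<Rightarrow> real \<Rightarrow> real
   \<Rightarrow> real^3 \<Rightarrow> real^3 \<Rightarrow> real^3" where
  "sysF s d a Tmax b alpha mu p c x y =
     vector [
       s - d * x$1 + a * x$1 * (1 - (x$1 + x$2) / Tmax) - b * x$1 * x$3 / (1 + alpha * x$3),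
       b * y$1 * y$3 / (1 + alpha * y$3) + a * x$2 * (1 - (x$1 + x$2) / Tmax) - mu * x$2,
       p * x$2 - c * x$3 ]"

definition T0_of :: "real \<Rightarrow> real \<Rightarrow> real \<Rightarrow> real \<Rightarrow> real" where
  "T0_of s d a Tmax = Tmax / (2 * a) * (a - d + sqrt ((a - d)^2 + 4 * a * s / Tmax))"

definition R0_of ::
  "real \<Rightarrow> real \<Rightarrow> real \<Rightarrow> real \<Rightarrow> real \<Rightarrow> real \<Rightarrow> real \<Rightarrow> real \<Rightarrow> real" where
  "R0_of s d a Tmax b mu p c =
     (1 / mu) * (b * p * T0_of s d a Tmax / c + a * (1 - T0_of s d a Tmax / Tmax))"

definition E1_of :: "real \<Rightarrow> real \<Rightarrow> real \<Rightarrow> real \<Rightarrow> real^3" where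
  "E1_of s d a Tmax = vector [T0_of s d a Tmax, 0, 0]"

definition pderiv3 :: "(real^3 \<Rightarrow> real) \<Rightarrow> real^3 \<Rightarrow> 3 \<Rightarrow> real" where
  "pderiv3 f x0 k = deriv (\<lambda>h. f (x0 + h *\<^sub>R axis k 1)) 0"

text \<open>Linearization at E1: x'(t) = A0 x(t) + A1 x(t - tau), with
  A0 = D_x F(E1,E1) and A1 = D_y F(E1,E1).\<close>
definition linA0 ::
  "real \<Rightarrow> real \<Rightarrow> real \<Rightarrow> real \<Rightarrow> real \<Rightarrow> real \<Rightarrow> real \<Rightarrow> real \<Rightarrow> real \<Rightarrow> real^3^3" where
  "linA0 s d a Tmax b alpha mu p c =
     (\<chi> i j. pderiv3 (\<lambda>x. sysF s d a Tmax b alpha mu p c x (E1_of s d a Tmax) $ i)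
                      (E1_of s d a Tmax) j)"

definition linA1 ::
  "real \<Rightarrow> real \<Rightarrow> real \<Rightarrow> real \<Rightarrow> real \<Rightarrow> real \<Rightarrow> real \<Rightarrow> real \<Rightarrow> real \<Rightarrow> real^3^3" where
  "linA1 s d a Tmax b alpha mu p c =
     (\<chi> i j. pderiv3 (\<lambda>y. sysF s d a Tmax b alpha mu p c (E1_of s d a Tmax) y $ i)
                      (E1_of s d a Tmax) j)"

definition charE1 ::
  "real \<Rightarrow> real \<Rightarrow> real \<Rightarrow> real \<Rightarrow> real \<Rightarrow> real \<Rightarrow> real \<Rightarrow> real \<Rightarrow> real \<Rightarrow> real
   \<Rightarrow> complex \<Rightarrow> complex" where
  "charE1 s d a Tmax b alpha mu p c tau z =
     det (\<chi> i j. (if i = j then z else 0)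
                 - complex_of_real (linA0 s d a Tmax b alpha mu p c $ i $ j)
                 - exp (- z * complex_of_real tau) * complex_of_real (linA1 s d a Tmax b alpha mu p c $ i $ j)
          :: complex^3^3)"

definition E1_locally_asymptotically_stable ::
  "real \<Rightarrow> real \<Rightarrow> real \<Rightarrow> real \<Rightarrow> real \<Rightarrow> real \<Rightarrow> real \<Rightarrow> real \<Rightarrow> real \<Rightarrow> real \<Rightarrow> bool" where
  "E1_locally_asymptotically_stable s d a Tmax b alpha mu p c tau \<longleftrightarrow>
     (\<forall>z. charE1 s d a Tmax b alpha mu p c tau z = 0 \<longrightarrow> Re z < 0)"

end

theory Submission imports Defs begin

text \<open>At E1 the Jacobians are block triangular: the T-equation decouples with the eigenvalue
  -sqrt((a - d)^2 + 4as/Tmax) < 0, and the infected (I, V) block has the characteristic function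
  (z - k)(z + c) - q e^(-z tau), with k = a(1 - T0/Tmax) - mu and q = b p T0.  Since
  R0 = (q/c + k + mu)/mu, the condition R0 > 1 is q + kc > 0 and R0 < 1 is q + kc < 0.
  In the first case the real function r \<mapsto> (r - k)(r + c) - q e^(-r tau) is negative at 0 and
  tends to infinity, so it has a positive root.  In the second case k < 0, and a root with
  Re z \<ge> 0 would satisfy |z - k| |z + c| \<ge> -kc > q \<ge> |q e^(-z tau)|, a contradiction.\<close>

definition infected_char :: "real \<Rightarrow> real \<Rightarrow> real \<Rightarrow> real \<Rightarrow> complex \<Rightarrow> complex" where
  "infected_char k c q tau z = (z - of_real k) * (z + of_real c) - of_real q * exp (- z * of_real tau)"

lemma pderiv3_eqI:
  "((\<lambda>h. f (x0 + h *\<^sub>R axis k 1)) has_real_derivative D) (at 0) \<Longrightarrow> pderiv3 f x0 k = D"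
  by (simp add: pderiv3_def DERIV_imp_deriv)

lemma linA0_eq:
  fixes s d a Tmax b alpha mu p c :: real
  assumes "Tmax \<noteq> 0"
  defines "T0 \<equiv> T0_of s d a Tmax"
  shows "linA0 s d a Tmax b alpha mu p c =
           vector [vector [-d + a * (1 - 2 * T0 / Tmax), -a * T0 / Tmax, -b * T0],
                   vector [0, a * (1 - T0 / Tmax) - mu, 0],
                   vector [0, p, -c]]"
  unfolding vec_eq_iff forall_3 linA0_def T0_def
  by (simp, intro conjI; rule pderiv3_eqI; simp add: sysF_def E1_of_def axis_def;
      auto intro!: derivative_eq_intros simp: field_simps assms)

lemma linA1_eq:
  assumes "Tmax \<noteq> 0"
  shows "linA1 s d a Tmax b alpha mu p c =
           vector [vector [0, 0, 0],
                   vector [0, 0, b * T0_of s d a Tmax],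
                   vector [0, 0, 0]]"
  unfolding vec_eq_iff forall_3 linA1_def
  by (simp, intro conjI; rule pderiv3_eqI; simp add: sysF_def E1_of_def axis_def;
      auto intro!: derivative_eq_intros simp: field_simps assms)

lemma charE1_factor:
  fixes s d a Tmax b alpha mu p c tau :: real
  assumes "Tmax \<noteq> 0"
  defines "T0 \<equiv> T0_of s d a Tmax"
  shows "charE1 s d a Tmax b alpha mu p c tau z =
           (z - of_real (-d + a * (1 - 2 * T0 / Tmax)))
             * infected_char (a * (1 - T0 / Tmax) - mu) c (p * b * T0) tau z"
  unfolding charE1_def linA0_eq[OF assms(1)] linA1_eq[OF assms(1)] det_3 infected_char_def T0_def
  using assms(1) by (simp add: field_simps)

lemma T0_of_pos:
  assumes "s > 0" "a > 0" "Tmax > 0"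
  shows "T0_of s d a Tmax > 0"
proof -
  have "\<bar>a - d\<bar> < sqrt ((a - d)^2 + 4 * a * s / Tmax)"
    using assms by (intro real_less_rsqrt) (simp add: power2_abs)
  then show ?thesis
    using assms by (simp add: T0_of_def)
qed

lemma T0_of_uninfected_eigenvalue:
  assumes "a > 0" "Tmax > 0"
  shows "-d + a * (1 - 2 * T0_of s d a Tmax / Tmax) = - sqrt ((a - d)^2 + 4 * a * s / Tmax)"
  using assms by (simp add: T0_of_def field_simps)

lemma R0_of_eq:
  assumes "mu > 0" "c > 0"
  shows "R0_of s d a Tmax b mu p c
           = ((p * b * T0_of s d a Tmax) / c + (a * (1 - T0_of s d a Tmax / Tmax) - mu) + mu) / mu"
  using assms by (simp add: R0_of_def field_simps)

lemma infected_char_of_real: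
  "infected_char k c q tau (of_real r) = of_real ((r - k) * (r + c) - q * exp (- r * tau))"
proof -
  have "exp (- of_real r * of_real tau) = (of_real (exp (- r * tau)) :: complex)"
    by (metis exp_of_real of_real_minus of_real_mult)
  then show ?thesis
    by (simp add: infected_char_def)
qed

lemma infected_char_positive_root:
  assumes "c > 0" "q > 0" "tau \<ge> 0" "q + k * c > 0"
  shows "\<exists>r>0. infected_char k c q tau (of_real r) = 0"
proof -
  define g where "g r = (r - k) * (r + c) - q * exp (- r * tau)" for r
  define R where "R = \<bar>k\<bar> + c + q + 1"
  have g0: "g 0 < 0"
    using assms(4) by (simp add: g_def algebra_simps)
  have "(R - k) * (R + c) \<ge> 1 * (q + 1)"
    by (rule mult_mono) (use assms in \<open>auto simp: R_def\<close>)
  moreover have "q * exp (- R * tau) \<le> q * 1"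
    using assms by (intro mult_left_mono) (auto simp: R_def intro!: mult_nonpos_nonneg)
  ultimately have gR: "g R \<ge> 0"
    by (simp add: g_def)
  have "R \<ge> 0"
    using assms by (simp add: R_def)
  then obtain r where r: "0 \<le> r" "g r = 0"
    using IVT[of g 0 0 R] g0 gR unfolding g_def by (auto intro!: continuous_intros)
  with g0 have "r > 0"
    by (metis order_le_less)
  moreover have "infected_char k c q tau (of_real r) = of_real (g r)"
    by (simp only: infected_char_of_real g_def)
  ultimately show ?thesis
    using r(2) by auto
qed

lemma infected_char_roots_in_left_half_plane:
  assumes "c > 0" "q \<ge> 0" "tau \<ge> 0" "q + k * c < 0"
    and root: "infected_char k c q tau z = 0"
  shows "Re z < 0"
proof (rule ccontr)
  assume "\<not> Re z < 0"
  then have Re_z: "Re z \<ge> 0" by simp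
  have k: "k < 0"
    using assms(1,2,4) by (smt (verit) mult_nonneg_nonneg)
  have "-k \<le> norm (z - of_real k)"
    using complex_Re_le_cmod[of "z - of_real k"] Re_z by simp
  moreover have "c \<le> norm (z + of_real c)"
    using complex_Re_le_cmod[of "z + of_real c"] Re_z by simp
  ultimately have "-k * c \<le> norm (z - of_real k) * norm (z + of_real c)"
    using k assms(1) by (intro mult_mono) auto
  also have "\<dots> = norm (of_real q * exp (- z * of_real tau))"
    using root by (simp add: infected_char_def norm_mult flip: norm_mult)
  also have "\<dots> \<le> q"
    using Re_z assms(2,3) by (simp add: norm_mult norm_exp_eq_Re mult_left_le mult_nonneg_nonneg)
  finally show False
    using assms(4) by (simp add: algebra_simps)
qed

theorem mainTheorem3:
  fixes s d a Tmax b alpha mu p c tau :: real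
  assumes "s > 0" "d > 0" "a > 0" "Tmax > 0" "b > 0" "alpha > 0" "mu > 0" "p > 0" "c > 0"
    and "tau \<ge> 0"
  shows "(R0_of s d a Tmax b mu p c > 1 \<longrightarrow>
            (\<exists>r::real. r > 0 \<and> charE1 s d a Tmax b alpha mu p c tau (complex_of_real r) = 0))
       \<and> (R0_of s d a Tmax b mu p c < 1 \<longrightarrow>
            (\<forall>tau'\<ge>0. E1_locally_asymptotically_stable s d a Tmax b alpha mu p c tau'))"
proof -
  define T0 where "T0 = T0_of s d a Tmax"
  define k where "k = a * (1 - T0 / Tmax) - mu"
  define q where "q = p * b * T0"
  have q: "q > 0"
    using T0_of_pos[of s a Tmax] assms by (simp add: q_def T0_def)
  have R0: "R0_of s d a Tmax b mu p c = (q / c + k + mu) / mu"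
    using R0_of_eq[of mu c] assms by (simp add: q_def k_def T0_def)
  define m where "m = -d + a * (1 - 2 * T0 / Tmax)"
  have "0 < sqrt ((a - d)^2 + 4 * a * s / Tmax)"
    using assms by (intro real_sqrt_gt_zero add_nonneg_pos) auto
  then have m: "m < 0"
    using T0_of_uninfected_eigenvalue[of a Tmax d s] assms by (simp add: m_def T0_def)
  have char: "charE1 s d a Tmax b alpha mu p c t z = (z - of_real m) * infected_char k c q t z" for t z
    using charE1_factor[of Tmax s d a] assms by (simp add: m_def k_def q_def T0_def)
  have "R0_of s d a Tmax b mu p c > 1 \<longleftrightarrow> q + k * c > 0"
       "R0_of s d a Tmax b mu p c < 1 \<longleftrightarrow> q + k * c < 0"
    unfolding R0 using assms by (simp_all add: field_simps)
  then show ?thesis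
    using infected_char_positive_root[of c q tau k] infected_char_roots_in_left_half_plane[of c q _ k]
      q m assms
    by (auto simp: E1_locally_asymptotically_stable_def char)
qed

end
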